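(* Let $\rho:\mathfrak{gl}_{n|n}\to\mathfrak{gl}(V)$ be an irreducible representation of the complex Lie superalgebra $\mathfrak{gl}_{n|n}$ on a finite-dimensional $\mathbb{Z}_2$-graded complex vector space $V=V_0\oplus V_1$ with $\dim V_0\ne\dim V_1$ (extend $\rho$ to the universal enveloping algebra). Then $\rho(I_\ell)=0$ for every $\ell\in\mathbb{N}$.
   Context: A standard basis of $\mathrm{End}(\mathbb{C}^{n|n})$ consists of $E^{\sigma\tau}_{ij}$ with $\sigma,\tau\in\{0,1\}$ and $i,j\in\{1,\dots,n\}$, of parity $\sigma+\tau\bmod 2$, satisfying $E^{\sigma\tau}_{ij}E^{\sigma'\tau'}_{i'j'}=\delta^{\tau\sigma'}\delta_{ji'}E^{\sigma\tau'}_{ij'}$ (here $\sigma=1$ labels the odd block $\mathbb{C}^n$ and $\sigma=0$ the even one). The Lie superalgebra bracket is the supercommutator. The degree-$\ell$ Casimir element of the universal enveloping algebra is $I_\ell=\sum E^{\sigma_1\sigma_2}_{j_1j_2}(-1)^{\sigma_2}E^{\sigma_2\sigma_3}_{j_2j_3}(-1)^{\sigma_3}\cdots E^{\sigma_{\ell-1}\sigma_\ell}_{j_{\ell-1}j_\ell}(-1)^{\sigma_\ell}E^{\sigma_\ell\sigma_1}_{j_\ell j_1}$, summed over all $\sigma_1,\dots,\sigma_\ell\in\{0,1\}$ and $j_1,\dots,j_\ell\in\{1,\dots,n\}$. A representation maps even elements to even operators and odd elements to odd operators and preserves brackets. *)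

theory Defs
  imports Complex_Main "HOL-Library.FuncSet"
begin

text \<open>Operators on the super vector space V = C^(p|q), realised as C^N with N = p+q:
  coordinates a < p span the even part V_0, coordinates p <= a < N span the odd part V_1.
  Operators are N x N matrices given as functions (only entries below N matter).\<close>

type_synonym cmat = "nat \<Rightarrow> nat \<Rightarrow> complex"
type_synonym cvec = "nat \<Rightarrow> complex"

definition mmul :: "nat \<Rightarrow> cmat \<Rightarrow> cmat \<Rightarrow> cmat" where
  "mmul N A B = (\<lambda>a c. \<Sum>b<N. A a b * B b c)"

definition mone :: cmat where
  "mone = (\<lambda>a c. if a = c then 1 else 0)"

definition mlist_prod :: "nat \<Rightarrow> cmat list \<Rightarrow> cmat" where
  "mlist_prod N As = foldr (mmul N) As mone"

definition mvec :: "nat \<Rightarrow> cmat \<Rightarrow> cvec \<Rightarrow> cvec" where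
  "mvec N A v = (\<lambda>a. if a < N then (\<Sum>b<N. A a b * v b) else 0)"

definition vpar :: "nat \<Rightarrow> nat \<Rightarrow> nat" where
  "vpar p a = (if a < p then 0 else 1)"

definition homog :: "nat \<Rightarrow> nat \<Rightarrow> nat \<Rightarrow> cmat \<Rightarrow> bool" where
  "homog p q d A \<longleftrightarrow> (\<forall>a<p+q. \<forall>b<p+q. A a b \<noteq> 0 \<longrightarrow> (vpar p a + vpar p b) mod 2 = d)"

definition epar :: "nat \<Rightarrow> nat \<Rightarrow> nat" where
  "epar \<sigma> \<tau> = (\<sigma> + \<tau>) mod 2"

definition supercomm :: "nat \<Rightarrow> nat \<Rightarrow> nat \<Rightarrow> cmat \<Rightarrow> cmat \<Rightarrow> cmat" where
  "supercomm N a b A B = (\<lambda>x y. mmul N A B x y - (-1) ^ (a * b) * mmul N B A x y)"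

text \<open>A representation of gl(n|n) on C^(p|q), given (by linearity) by the images
  rho sigma tau i j of the basis elements E^{sigma tau}_{ij} (sigma, tau < 2, i, j < n):
  parity is respected and the supercommutator relations
  [E^{st}_{ij}, E^{s't'}_{i'j'}] = d_{ts'} d_{ji'} E^{st'}_{ij'}
      - (-1)^{|E||E'|} d_{t's} d_{j'i} E^{s't}_{i'j} are preserved.\<close>
definition is_rep :: "nat \<Rightarrow> nat \<Rightarrow> nat \<Rightarrow> (nat \<Rightarrow> nat \<Rightarrow> nat \<Rightarrow> nat \<Rightarrow> cmat) \<Rightarrow> bool" where
  "is_rep n p q \<rho> \<longleftrightarrow>
     (\<forall>\<sigma><2. \<forall>\<tau><2. \<forall>i<n. \<forall>j<n. homog p q (epar \<sigma> \<tau>) (\<rho> \<sigma> \<tau> i j)) \<and>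
     (\<forall>\<sigma><2. \<forall>\<tau><2. \<forall>\<sigma>'<2. \<forall>\<tau>'<2. \<forall>i<n. \<forall>j<n. \<forall>i'<n. \<forall>j'<n. \<forall>x<p+q. \<forall>y<p+q.
        supercomm (p+q) (epar \<sigma> \<tau>) (epar \<sigma>' \<tau>') (\<rho> \<sigma> \<tau> i j) (\<rho> \<sigma>' \<tau>' i' j') x y =
          (if \<tau> = \<sigma>' \<and> j = i' then \<rho> \<sigma> \<tau>' i j' x y else 0)
          - (-1) ^ (epar \<sigma> \<tau> * epar \<sigma>' \<tau>') *
            (if \<tau>' = \<sigma> \<and> j' = i then \<rho> \<sigma>' \<tau> i' j x y else 0))"

definition vecs :: "nat \<Rightarrow> cvec set" where
  "vecs N = {v. \<forall>a\<ge>N. v a = 0}"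

definition is_subspace :: "nat \<Rightarrow> cvec set \<Rightarrow> bool" where
  "is_subspace N W \<longleftrightarrow> W \<subseteq> vecs N \<and> (\<lambda>_. 0) \<in> W \<and>
     (\<forall>v\<in>W. \<forall>w\<in>W. (\<lambda>a. v a + w a) \<in> W) \<and> (\<forall>c. \<forall>v\<in>W. (\<lambda>a. c * v a) \<in> W)"

text \<open>Z2-graded subspace: W = (W \<inter> V_0) \<oplus> (W \<inter> V_1)\<close>
definition graded :: "nat \<Rightarrow> cvec set \<Rightarrow> bool" where
  "graded p W \<longleftrightarrow> (\<forall>w\<in>W. (\<lambda>a. if a < p then w a else 0) \<in> W)"

definition invariant :: "nat \<Rightarrow> nat \<Rightarrow> nat \<Rightarrow> (nat \<Rightarrow> nat \<Rightarrow> nat \<Rightarrow> nat \<Rightarrow> cmat) \<Rightarrow> cvec set \<Rightarrow> bool" where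
  "invariant n p q \<rho> W \<longleftrightarrow>
     (\<forall>\<sigma><2. \<forall>\<tau><2. \<forall>i<n. \<forall>j<n. \<forall>w\<in>W. mvec (p+q) (\<rho> \<sigma> \<tau> i j) w \<in> W)"

definition irreducible_rep :: "nat \<Rightarrow> nat \<Rightarrow> nat \<Rightarrow> (nat \<Rightarrow> nat \<Rightarrow> nat \<Rightarrow> nat \<Rightarrow> cmat) \<Rightarrow> bool" where
  "irreducible_rep n p q \<rho> \<longleftrightarrow> 0 < p + q \<and>
     (\<forall>W. is_subspace (p+q) W \<and> graded p W \<and> invariant n p q \<rho> W \<longrightarrow>
          W = {\<lambda>_. 0} \<or> W = vecs (p+q))"

text \<open>image rho(I_l) of the degree-l Casimir element; indices k = 0..l-1 stand for 1..l,
  the factors are E^{s_k s_(k+1)}_{j_k j_(k+1)} (cyclically), with signs (-1)^{s_2+...+s_l}.\<close>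
definition casimir_image :: "nat \<Rightarrow> nat \<Rightarrow> nat \<Rightarrow> (nat \<Rightarrow> nat \<Rightarrow> nat \<Rightarrow> nat \<Rightarrow> cmat) \<Rightarrow> nat \<Rightarrow> cmat" where
  "casimir_image n p q \<rho> l = (\<lambda>x y.
     (\<Sum>s\<in>{0..<l} \<rightarrow>\<^sub>E {0..<2}. \<Sum>j\<in>{0..<l} \<rightarrow>\<^sub>E {0..<n}.
        (-1) ^ (\<Sum>k\<in>{1..<l}. s k) *
           mlist_prod (p+q) (map (\<lambda>k. \<rho> (s k) (s ((k+1) mod l)) (j k) (j ((k+1) mod l))) [0..<l]) x y))"

end

theory Submission
  imports Defs "Jordan_Normal_Form.Spectral_Radius"
begin

text \<open>
  Write E a b, for a = (sigma, i) and b = (tau, j), for the image of E^(sigma tau)_(i j), and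
  let E_power k be the (k+1)-st power of the matrix (E a b)_(a, b), with a sign (-1)^sigma at
  every contracted index c = (sigma, i); then rho(I_(k+1)) is the trace sum_a E_power k a a.
  The entries of E_power k satisfy the same supercommutation relations with the generators as
  the E a b themselves.  Taking the trace shows that rho(I_(k+1)) commutes with the whole action;
  it is even, so by Schur's lemma (its eigenspaces are graded invariant subspaces) it is a
  scalar c.  The same relations exhibit rho(I_(k+1)) as a sum of odd supercommutators
  [E (0, i) (1, i), E_power k (1, i) (0, i)], so its supertrace vanishes; since the supertrace
  of the identity is dim V_0 - dim V_1, which is nonzero, c = 0.
\<close>

section \<open>Matrix algebra on C^N\<close>

lemma mmul_assoc: "mmul N (mmul N A B) C = mmul N A (mmul N B C)"
proof (intro ext)
  fix x y
  have "mmul N (mmul N A B) C x y = (\<Sum>c<N. \<Sum>b<N. A x b * B b c * C c y)"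
    unfolding mmul_def by (simp add: sum_distrib_right)
  also have "\<dots> = (\<Sum>b<N. \<Sum>c<N. A x b * B b c * C c y)"
    by (rule sum.swap)
  also have "\<dots> = mmul N A (mmul N B C) x y"
    unfolding mmul_def by (simp add: sum_distrib_left mult.assoc)
  finally show "mmul N (mmul N A B) C x y = mmul N A (mmul N B C) x y" .
qed

lemma mmul_sum_left: "mmul N (\<lambda>u v. \<Sum>c\<in>S. F c u v) B u v = (\<Sum>c\<in>S. mmul N (F c) B u v)"
  unfolding mmul_def sum_distrib_right by (rule sum.swap)

lemma mmul_sum_right: "mmul N A (\<lambda>u v. \<Sum>c\<in>S. F c u v) u v = (\<Sum>c\<in>S. mmul N A (F c) u v)"
  unfolding mmul_def sum_distrib_left by (rule sum.swap)

lemma mmul_scale_left [simp]: "mmul N (\<lambda>u v. k * A u v) B u v = k * mmul N A B u v"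
  unfolding mmul_def by (simp add: sum_distrib_left mult.assoc)

lemma mmul_scale_right [simp]: "mmul N A (\<lambda>u v. k * B u v) u v = k * mmul N A B u v"
  unfolding mmul_def by (simp add: sum_distrib_left mult.left_commute)

lemma mmul_diff_left [simp]:
  "mmul N (\<lambda>u v. A u v - A' u v) B u v = mmul N A B u v - mmul N A' B u v"
  unfolding mmul_def by (simp add: left_diff_distrib sum_subtractf)

lemma mmul_diff_right [simp]:
  "mmul N A (\<lambda>u v. B u v - B' u v) u v = mmul N A B u v - mmul N A B' u v"
  unfolding mmul_def by (simp add: right_diff_distrib sum_subtractf)

lemma mmul_if_left [simp]:
  "mmul N (\<lambda>u v. if Q then A u v else 0) B u v = (if Q then mmul N A B u v else 0)"
  unfolding mmul_def by simp

lemma mmul_if_right [simp]: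
  "mmul N A (\<lambda>u v. if Q then B u v else 0) u v = (if Q then mmul N A B u v else 0)"
  unfolding mmul_def by simp

definition trunc :: "nat \<Rightarrow> cmat \<Rightarrow> cmat" where
  "trunc N A = (\<lambda>u v. if u < N \<and> v < N then A u v else 0)"

lemma mmul_trunc: "mmul N (trunc N A) (trunc N B) = trunc N (mmul N A B)"
  unfolding mmul_def trunc_def by (intro ext) auto

lemma mmul_trunc_left: "u < N \<Longrightarrow> mmul N (trunc N A) B u v = mmul N A B u v"
  unfolding mmul_def trunc_def by simp

lemma mmul_trunc_right: "v < N \<Longrightarrow> mmul N A (trunc N B) u v = mmul N A B u v"
  unfolding mmul_def trunc_def by simp

lemma mmul_mone_left_trunc: "mmul N mone (trunc N A) = trunc N A"
  unfolding mmul_def mone_def trunc_def by (intro ext) (simp add: if_distrib[of "\<lambda>x. x * _"] cong: if_cong)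

lemma mmul_mone_right_trunc: "mmul N (trunc N A) mone = trunc N A"
  unfolding mmul_def mone_def trunc_def by (intro ext) (simp add: if_distrib[of "\<lambda>x. _ * x"] cong: if_cong)

lemma foldr_mmul_trunc:
  "foldr (mmul N) As (trunc N B) = mmul N (mlist_prod N As) (trunc N B)"
  unfolding mlist_prod_def
  by (induction As) (simp_all add: mmul_mone_left_trunc mmul_assoc)

lemma mlist_prod_snoc_trunc:
  "mlist_prod N (As @ [trunc N B]) = mmul N (mlist_prod N As) (trunc N B)"
  using foldr_mmul_trunc[of N As B] unfolding mlist_prod_def
  by (simp add: mmul_mone_right_trunc)

lemma mlist_prod_map_trunc:
  "u < N \<Longrightarrow> v < N \<Longrightarrow> mlist_prod N (map (trunc N) As) u v = mlist_prod N As u v"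
proof (induction As arbitrary: u)
  case (Cons A As)
  then show ?case
    unfolding mlist_prod_def by (simp add: mmul_def trunc_def)
qed simp

lemma supercomm_trunc:
  "supercomm N d d' (trunc N A) (trunc N B) = trunc N (supercomm N d d' A B)"
  unfolding supercomm_def mmul_trunc by (intro ext) (simp add: trunc_def)

lemma supercomm_leibniz:
  assumes "(-1::complex) ^ (d1 * d) = (-1) ^ (d1 * d2) * (-1) ^ (d1 * d3)"
  shows "supercomm N d1 d X (mmul N Y Z) u v =
     mmul N (supercomm N d1 d2 X Y) Z u v + (-1) ^ (d1 * d2) * mmul N Y (supercomm N d1 d3 X Z) u v"
proof -
  have "\<And>a b c s2 s3 :: complex. a - (s2 * s3) * c = (a - s2 * b) + s2 * (b - s3 * c)"
    by (simp add: algebra_simps)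
  then show ?thesis
    unfolding supercomm_def assms by (simp only: mmul_diff_left mmul_diff_right
        mmul_scale_left mmul_scale_right mmul_assoc)
qed

lemma supercomm_sum:
  "supercomm N d1 d X (\<lambda>u v. \<Sum>c\<in>S. k c * F c u v) u v = (\<Sum>c\<in>S. k c * supercomm N d1 d X (F c) u v)"
  unfolding supercomm_def mmul_sum_left[where F = "\<lambda>c u v. k c * F c u v"]
    mmul_sum_right[where F = "\<lambda>c u v. k c * F c u v"]
  by (simp add: sum_distrib_left right_diff_distrib sum_subtractf mult.left_commute)

section \<open>Parity and supertrace\<close>

lemma homog_mmul:
  assumes "homog p q d1 A" "homog p q d2 B"
  shows "homog p q ((d1 + d2) mod 2) (mmul (p+q) A B)"
  unfolding homog_def
proof (intro allI impI)
  fix a b assume ab: "a < p+q" "b < p+q" and "mmul (p+q) A B a b \<noteq> 0"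
  then obtain c where c: "c < p+q" "A a c \<noteq> 0" "B c b \<noteq> 0"
    unfolding mmul_def by (auto elim: sum.not_neutral_contains_not_neutral)
  then have "(vpar p a + vpar p c) mod 2 = d1" "(vpar p c + vpar p b) mod 2 = d2"
    using assms ab unfolding homog_def by auto
  then show "(vpar p a + vpar p b) mod 2 = (d1 + d2) mod 2"
    unfolding vpar_def by (auto split: if_splits)
qed

lemma homog_sum:
  assumes "\<And>c. c \<in> S \<Longrightarrow> homog p q d (F c)"
  shows "homog p q d (\<lambda>u v. \<Sum>c\<in>S. k c * F c u v)"
  unfolding homog_def
proof (intro allI impI)
  fix a b assume ab: "a < p+q" "b < p+q" and "(\<Sum>c\<in>S. k c * F c a b) \<noteq> 0"
  then obtain c where "c \<in> S" "F c a b \<noteq> 0"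
    by (auto elim: sum.not_neutral_contains_not_neutral)
  then show "(vpar p a + vpar p b) mod 2 = d"
    using assms ab unfolding homog_def by auto
qed

lemma homog_trunc: "homog p q d A \<Longrightarrow> homog p q d (trunc (p+q) A)"
  unfolding homog_def trunc_def by auto

definition str :: "nat \<Rightarrow> nat \<Rightarrow> cmat \<Rightarrow> complex" where
  "str N p X = (\<Sum>u<N. (-1) ^ vpar p u * X u u)"

lemma str_supercomm_odd:
  assumes X: "homog p q 1 X"
  shows "str (p+q) p (supercomm (p+q) 1 1 X Y) = 0"
proof -
  let ?N = "p+q" and ?s = "\<lambda>u. (-1::complex) ^ vpar p u"
  have "str ?N p (supercomm ?N 1 1 X Y) =
      (\<Sum>u<?N. ?s u * (\<Sum>b<?N. X u b * Y b u)) + (\<Sum>u<?N. ?s u * (\<Sum>b<?N. Y u b * X b u))"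
    unfolding str_def supercomm_def mmul_def by (simp add: sum.distrib algebra_simps)
  also have "\<dots> = (\<Sum>u<?N. \<Sum>b<?N. ?s u * (X u b * Y b u)) + (\<Sum>u<?N. \<Sum>b<?N. ?s u * (Y u b * X b u))"
    by (simp add: sum_distrib_left)
  also have "(\<Sum>u<?N. \<Sum>b<?N. ?s u * (Y u b * X b u)) = (\<Sum>u<?N. \<Sum>b<?N. ?s b * (X u b * Y b u))"
    by (subst sum.swap) (simp add: mult_ac)
  also have "(\<Sum>u<?N. \<Sum>b<?N. ?s u * (X u b * Y b u)) + \<dots> =
      (\<Sum>u<?N. \<Sum>b<?N. (?s u + ?s b) * (X u b * Y b u))"
    by (simp add: sum.distrib algebra_simps)
  also have "\<dots> = 0"
  proof (intro sum.neutral ballI)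
    fix u b assume "u \<in> {..<?N}" "b \<in> {..<?N}"
    then have "X u b \<noteq> 0 \<Longrightarrow> ?s u + ?s b = 0"
      using X unfolding homog_def vpar_def by (auto split: if_splits)
    then show "(?s u + ?s b) * (X u b * Y b u) = 0" by fastforce
  qed
  finally show ?thesis .
qed

lemma str_sum: "str N p (\<lambda>u v. \<Sum>i\<in>S. F i u v) = (\<Sum>i\<in>S. str N p (F i))"
  unfolding str_def sum_distrib_left by (rule sum.swap)

lemma sum_parity_signs: "(\<Sum>u<p+q. (-1::complex) ^ vpar p u) = of_nat p - of_nat q"
proof (induction q)
  case 0
  have "(\<Sum>u<p. (-1::complex) ^ vpar p u) = (\<Sum>u<p. 1)"
    by (intro sum.cong refl) (simp add: vpar_def)
  then show ?case by simp
next
  case (Suc q)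
  have "(-1::complex) ^ vpar p (p+q) = -1" by (simp add: vpar_def)
  then show ?case using Suc by simp
qed

lemma str_scalar:
  assumes "\<And>u. u < p+q \<Longrightarrow> C u u = c"
  shows "str (p+q) p C = c * (of_nat p - of_nat q)"
proof -
  have "str (p+q) p C = (\<Sum>u<p+q. c * (-1) ^ vpar p u)"
    unfolding str_def using assms by (intro sum.cong) auto
  also have "\<dots> = c * (of_nat p - of_nat q)"
    by (simp flip: sum_distrib_left add: sum_parity_signs)
  finally show ?thesis .
qed

section \<open>Schur's lemma for even operators\<close>

lemma mvec_in_vecs: "mvec N A w \<in> vecs N"
  unfolding vecs_def mvec_def by simp

lemma mvec_mmul: "mvec N (mmul N A B) w = mvec N A (mvec N B w)"
proof (intro ext)
  fix a
  have "(\<Sum>b<N. mmul N A B a b * w b) = (\<Sum>b<N. \<Sum>c<N. A a c * B c b * w b)"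
    unfolding mmul_def by (simp add: sum_distrib_right)
  also have "\<dots> = (\<Sum>c<N. \<Sum>b<N. A a c * B c b * w b)"
    by (rule sum.swap)
  also have "\<dots> = (\<Sum>c<N. A a c * (\<Sum>b<N. B c b * w b))"
    by (simp add: sum_distrib_left mult.assoc)
  finally show "mvec N (mmul N A B) w a = mvec N A (mvec N B w) a"
    unfolding mvec_def by simp
qed

lemma mvec_cong: "(\<And>u v. u < N \<Longrightarrow> v < N \<Longrightarrow> A u v = B u v) \<Longrightarrow> mvec N A w = mvec N B w"
  unfolding mvec_def by (auto intro!: ext sum.cong)

lemma mvec_zero [simp]: "mvec N A (\<lambda>_. 0) = (\<lambda>_. 0)"
  by (intro ext) (simp add: mvec_def)

lemma mvec_scale: "mvec N A (\<lambda>a. c * w a) = (\<lambda>a. c * mvec N A w a)"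
  unfolding mvec_def by (auto simp: sum_distrib_left mult_ac)

lemma mvec_add: "mvec N A (\<lambda>a. v a + w a) = (\<lambda>a. mvec N A v a + mvec N A w a)"
  unfolding mvec_def by (auto simp: distrib_left sum.distrib)

lemma mvec_even_proj:
  assumes "homog p q 0 C"
  shows "mvec (p+q) C (\<lambda>a. if a < p then w a else 0) = (\<lambda>a. if a < p then mvec (p+q) C w a else 0)"
proof (intro ext)
  fix a
  have "C a b * (if b < p then w b else 0) = (if a < p then C a b * w b else 0)"
    if "a < p+q" "b < p+q" for b
    using assms that unfolding homog_def vpar_def by (cases "C a b = 0") (auto split: if_splits)
  then have "a < p+q \<Longrightarrow> (\<Sum>b<p+q. C a b * (if b < p then w b else 0)) =
      (\<Sum>b<p+q. if a < p then C a b * w b else 0)"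
    by (intro sum.cong) auto
  then show "mvec (p+q) C (\<lambda>a. if a < p then w a else 0) a = (if a < p then mvec (p+q) C w a else 0)"
    unfolding mvec_def by (cases "a < p") auto
qed

definition eigenspace :: "nat \<Rightarrow> cmat \<Rightarrow> complex \<Rightarrow> cvec set" where
  "eigenspace N C c = {w \<in> vecs N. mvec N C w = (\<lambda>a. c * w a)}"

lemma is_subspace_eigenspace: "is_subspace N (eigenspace N C c)"
  unfolding is_subspace_def eigenspace_def vecs_def
  by (auto simp: mvec_add mvec_scale distrib_left mult.left_commute)

lemma graded_eigenspace: "homog p q 0 C \<Longrightarrow> graded p (eigenspace (p+q) C c)"
  unfolding graded_def eigenspace_def vecs_def by (simp add: mvec_even_proj fun_eq_iff)

lemma invariant_eigenspace:
  fixes \<rho> :: "nat \<Rightarrow> nat \<Rightarrow> nat \<Rightarrow> nat \<Rightarrow> cmat"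
  assumes "\<And>\<sigma> \<tau> i j u v. \<lbrakk>\<sigma> < 2; \<tau> < 2; i < n; j < n; u < p+q; v < p+q\<rbrakk> \<Longrightarrow>
      mmul (p+q) C (\<rho> \<sigma> \<tau> i j) u v = mmul (p+q) (\<rho> \<sigma> \<tau> i j) C u v"
  shows "invariant n p q \<rho> (eigenspace (p+q) C c)"
  unfolding invariant_def
proof (intro allI impI ballI)
  fix \<sigma> \<tau> i j :: nat and w
  assume idx: "\<sigma> < 2" "\<tau> < 2" "i < n" "j < n" and "w \<in> eigenspace (p+q) C c"
  then have w: "mvec (p+q) C w = (\<lambda>a. c * w a)" by (simp add: eigenspace_def)
  have "mvec (p+q) C (mvec (p+q) (\<rho> \<sigma> \<tau> i j) w) = mvec (p+q) (mmul (p+q) C (\<rho> \<sigma> \<tau> i j)) w"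
    by (simp add: mvec_mmul)
  also have "\<dots> = mvec (p+q) (mmul (p+q) (\<rho> \<sigma> \<tau> i j) C) w"
    using idx by (intro mvec_cong assms)
  also have "\<dots> = (\<lambda>a. c * mvec (p+q) (\<rho> \<sigma> \<tau> i j) w a)"
    by (simp add: mvec_mmul w mvec_scale)
  finally show "mvec (p+q) (\<rho> \<sigma> \<tau> i j) w \<in> eigenspace (p+q) C c"
    by (simp add: eigenspace_def mvec_in_vecs)
qed

lemma eigenspace_nontrivial:
  assumes "0 < N"
  obtains c where "eigenspace N C c \<noteq> {\<lambda>_. 0}"
proof -
  define A where "A = mat N N (\<lambda>(u, v). C u v)"
  have A: "A \<in> carrier_mat N N" unfolding A_def by simp
  obtain c where "eigenvalue A c"
    using spectrum_non_empty[OF A assms] unfolding spectrum_def by auto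
  then obtain x where x: "x \<in> carrier_vec N" "x \<noteq> 0\<^sub>v N" "A *\<^sub>v x = c \<cdot>\<^sub>v x"
    unfolding eigenvalue_def eigenvector_def using A by auto
  define w where "w = (\<lambda>a. if a < N then x $ a else 0)"
  have "mvec N C w a = c * w a" for a
  proof (cases "a < N")
    case True
    then have "(A *\<^sub>v x) $ a = (c \<cdot>\<^sub>v x) $ a" using x(3) by simp
    then show ?thesis
      using True x(1) unfolding A_def mvec_def w_def
      by (simp add: mult_mat_vec_def scalar_prod_def atLeast0LessThan)
  qed (simp add: mvec_def w_def)
  then have "w \<in> eigenspace N C c"
    unfolding eigenspace_def vecs_def w_def by auto
  moreover have "w \<noteq> (\<lambda>_. 0)"
  proof
    assume "w = (\<lambda>_. 0)"
    then have "x $ a = 0" if "a < N" for a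
      using that fun_cong[of w "\<lambda>_. 0" a] unfolding w_def by simp
    then have "x = 0\<^sub>v N" using x(1) by (intro eq_vecI) auto
    then show False using x(2) by simp
  qed
  ultimately show ?thesis using that by blast
qed

lemma scalar_if_eigenspace_full:
  assumes "eigenspace N C c = vecs N" "u < N" "v < N"
  shows "C u v = c * mone u v"
proof -
  let ?e = "\<lambda>b. if b = v then (1::complex) else 0"
  have "?e \<in> eigenspace N C c" using assms(1,3) unfolding vecs_def by auto
  then have "mvec N C ?e u = c * ?e u" unfolding eigenspace_def by simp
  then show ?thesis
    using assms(2,3) unfolding mvec_def
    by (simp add: mone_def if_distrib[of "\<lambda>x. C u _ * x"] cong: if_cong)
qed

lemma even_commuting_operator_scalar:
  fixes \<rho> :: "nat \<Rightarrow> nat \<Rightarrow> nat \<Rightarrow> nat \<Rightarrow> cmat"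
  assumes irr: "irreducible_rep n p q \<rho>" and even: "homog p q 0 C"
    and comm: "\<And>\<sigma> \<tau> i j u v. \<lbrakk>\<sigma> < 2; \<tau> < 2; i < n; j < n; u < p+q; v < p+q\<rbrakk> \<Longrightarrow>
      mmul (p+q) C (\<rho> \<sigma> \<tau> i j) u v = mmul (p+q) (\<rho> \<sigma> \<tau> i j) C u v"
  obtains c where "\<And>u v. u < p+q \<Longrightarrow> v < p+q \<Longrightarrow> C u v = c * mone u v"
proof -
  have "0 < p+q" using irr unfolding irreducible_rep_def by simp
  then obtain c where nonzero: "eigenspace (p+q) C c \<noteq> {\<lambda>_. 0}"
    by (rule eigenspace_nontrivial)
  have "is_subspace (p+q) (eigenspace (p+q) C c)" "graded p (eigenspace (p+q) C c)"
    "invariant n p q \<rho> (eigenspace (p+q) C c)"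
    by (rule is_subspace_eigenspace, rule graded_eigenspace[OF even], rule invariant_eigenspace[OF comm])
  then have full: "eigenspace (p+q) C c = vecs (p+q)"
    using irr nonzero unfolding irreducible_rep_def by blast
  show ?thesis by (rule that) (rule scalar_if_eigenspace_full[OF full])
qed

section \<open>The Casimir elements\<close>

lemma sum_PiE_insert:
  assumes "x \<notin> S"
  shows "(\<Sum>f\<in>Pi\<^sub>E (insert x S) T. F f) = (\<Sum>y\<in>T x. \<Sum>g\<in>Pi\<^sub>E S T. F (g(x := y)))"
proof -
  have "(\<Sum>f\<in>Pi\<^sub>E (insert x S) T. F f) = (\<Sum>f\<in>(\<lambda>(y, g). g(x := y)) ` (T x \<times> Pi\<^sub>E S T). F f)"
    by (simp only: PiE_insert_eq)
  also have "\<dots> = (\<Sum>yg\<in>T x \<times> Pi\<^sub>E S T. F ((\<lambda>(y, g). g(x := y)) yg))"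
    by (rule sum.reindex[OF inj_combinator[OF assms], unfolded comp_def])
  also have "\<dots> = (\<Sum>y\<in>T x. \<Sum>g\<in>Pi\<^sub>E S T. F (g(x := y)))"
    by (simp add: sum.cartesian_product split_beta)
  finally show ?thesis .
qed

lemma sum_PiE_pair_insert:
  assumes "x \<notin> S"
  shows "(\<Sum>s\<in>insert x S \<rightarrow>\<^sub>E A. \<Sum>j\<in>insert x S \<rightarrow>\<^sub>E B. F s j) =
    (\<Sum>\<sigma>\<in>A. \<Sum>i\<in>B. \<Sum>s\<in>S \<rightarrow>\<^sub>E A. \<Sum>j\<in>S \<rightarrow>\<^sub>E B. F (s(x := \<sigma>)) (j(x := i)))"
proof -
  have "(\<Sum>s\<in>insert x S \<rightarrow>\<^sub>E A. \<Sum>j\<in>insert x S \<rightarrow>\<^sub>E B. F s j) =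
      (\<Sum>\<sigma>\<in>A. \<Sum>s\<in>S \<rightarrow>\<^sub>E A. \<Sum>i\<in>B. \<Sum>j\<in>S \<rightarrow>\<^sub>E B. F (s(x := \<sigma>)) (j(x := i)))"
    by (simp only: sum_PiE_insert[OF assms])
  also have "\<dots> = (\<Sum>\<sigma>\<in>A. \<Sum>i\<in>B. \<Sum>s\<in>S \<rightarrow>\<^sub>E A. \<Sum>j\<in>S \<rightarrow>\<^sub>E B. F (s(x := \<sigma>)) (j(x := i)))"
    by (intro sum.cong refl sum.swap)
  finally show ?thesis .
qed

definition par :: "nat \<times> nat \<Rightarrow> nat \<times> nat \<Rightarrow> nat" where
  "par a b = epar (fst a) (fst b)"

lemma par_self [simp]: "par a a = 0"
  by (simp add: par_def epar_def)

lemma par_add: "(par a c + par c b) mod 2 = par a b"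
  unfolding par_def epar_def by (simp add: mod2_eq_if even_add)

lemma sign_par_split: "(-1::complex) ^ (m * par a b) = (-1) ^ (m * par a c) * (-1) ^ (m * par c b)"
  unfolding par_def epar_def by (simp add: minus_one_power_iff even_mult_iff)

lemma sign_par_swap:
  "(-1::complex) ^ fst x * (-1) ^ (par x y * par a x) = (-1) ^ fst y * (-1) ^ (par x y * par a y)"
  unfolding par_def epar_def by (simp add: minus_one_power_iff even_mult_iff)

locale gl_rep =
  fixes n p q :: nat and \<rho> :: "nat \<Rightarrow> nat \<Rightarrow> nat \<Rightarrow> nat \<Rightarrow> cmat"
  assumes rep: "is_rep n p q \<rho>"
begin

definition Idx :: "(nat \<times> nat) set" where
  "Idx = {0, 1} \<times> {..<n}"

lemma finite_Idx [simp]: "finite Idx"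
  unfolding Idx_def by simp

lemma sum_Idx: "(\<Sum>a\<in>Idx. f a) = (\<Sum>i<n. f (0, i) + f (1, i))"
  unfolding Idx_def by (simp add: sum.cartesian_product' sum.distrib)

text \<open>The relations of is_rep only constrain the entries below p + q; truncating
  the matrices turns them into equations of functions.\<close>

definition E :: "nat \<times> nat \<Rightarrow> nat \<times> nat \<Rightarrow> cmat" where
  "E a b = trunc (p+q) (\<rho> (fst a) (fst b) (snd a) (snd b))"

lemma homog_E: "a \<in> Idx \<Longrightarrow> b \<in> Idx \<Longrightarrow> homog p q (par a b) (E a b)"
  using conjunct1[OF rep[unfolded is_rep_def]]
  unfolding Idx_def E_def par_def by (auto intro: homog_trunc)

definition covariant :: "(nat \<times> nat \<Rightarrow> nat \<times> nat \<Rightarrow> cmat) \<Rightarrow> bool" where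
  "covariant F \<longleftrightarrow> (\<forall>x\<in>Idx. \<forall>y\<in>Idx. \<forall>a\<in>Idx. \<forall>b\<in>Idx.
     supercomm (p+q) (par x y) (par a b) (E x y) (F a b) =
       (\<lambda>u v. (if y = a then F x b u v else 0)
         - (-1) ^ (par x y * par a b) * (if b = x then F a y u v else 0)))"

lemma covariant_E: "covariant E"
  unfolding covariant_def
proof (intro ballI ext)
  fix x y a b :: "nat \<times> nat" and u v
  assume idx: "x \<in> Idx" "y \<in> Idx" "a \<in> Idx" "b \<in> Idx"
  show "supercomm (p+q) (par x y) (par a b) (E x y) (E a b) u v =
      (if y = a then E x b u v else 0) - (-1) ^ (par x y * par a b) * (if b = x then E a y u v else 0)"
  proof (cases "u < p+q \<and> v < p+q")
    case True
    obtain s1 i1 s2 i2 s3 i3 s4 i4 where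
      ix: "x = (s1, i1)" "y = (s2, i2)" "a = (s3, i3)" "b = (s4, i4)"
      and bounds: "s1 < 2" "s2 < 2" "s3 < 2" "s4 < 2" "i1 < n" "i2 < n" "i3 < n" "i4 < n"
      using idx unfolding Idx_def by auto
    show ?thesis
      using conjunct2[OF rep[unfolded is_rep_def], rule_format, OF bounds, of u v] True
      unfolding E_def supercomm_trunc par_def ix by (simp add: trunc_def)
  next
    case False
    then have "\<And>A. trunc (p+q) A u v = 0" by (auto simp: trunc_def)
    then show ?thesis unfolding E_def supercomm_trunc by simp
  qed
qed

lemma covariantD:
  "covariant F \<Longrightarrow> x \<in> Idx \<Longrightarrow> y \<in> Idx \<Longrightarrow> a \<in> Idx \<Longrightarrow> b \<in> Idx \<Longrightarrow>
    supercomm (p+q) (par x y) (par a b) (E x y) (F a b) u v =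
      (if y = a then F x b u v else 0) - (-1) ^ (par x y * par a b) * (if b = x then F a y u v else 0)"
  unfolding covariant_def by simp

definition homog_family :: "(nat \<times> nat \<Rightarrow> nat \<times> nat \<Rightarrow> cmat) \<Rightarrow> bool" where
  "homog_family F \<longleftrightarrow> (\<forall>a\<in>Idx. \<forall>b\<in>Idx. homog p q (par a b) (F a b))"

lemma homog_family_E: "homog_family E"
  unfolding homog_family_def using homog_E by blast

definition contract ::
  "(nat \<times> nat \<Rightarrow> nat \<times> nat \<Rightarrow> cmat) \<Rightarrow> (nat \<times> nat \<Rightarrow> nat \<times> nat \<Rightarrow> cmat) \<Rightarrow> nat \<times> nat \<Rightarrow> nat \<times> nat \<Rightarrow> cmat"
  where "contract F G a b = (\<lambda>u v. \<Sum>c\<in>Idx. (-1) ^ fst c * mmul (p+q) (F a c) (G c b) u v)"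

lemma homog_family_contract:
  assumes F: "homog_family F" and G: "homog_family G"
  shows "homog_family (contract F G)"
  unfolding homog_family_def contract_def
proof (intro ballI homog_sum)
  fix a b c assume "a \<in> Idx" "b \<in> Idx" "c \<in> Idx"
  then have "homog p q ((par a c + par c b) mod 2) (mmul (p+q) (F a c) (G c b))"
    using F G unfolding homog_family_def by (blast intro: homog_mmul)
  then show "homog p q (par a b) (mmul (p+q) (F a c) (G c b))"
    unfolding par_add .
qed

lemma supercomm_E_mmul:
  assumes F: "covariant F" and G: "covariant G"
    and idx: "x \<in> Idx" "y \<in> Idx" "a \<in> Idx" "b \<in> Idx" "c \<in> Idx"
  shows "supercomm (p+q) (par x y) (par a b) (E x y) (mmul (p+q) (F a c) (G c b)) u v =
      (if y = a then mmul (p+q) (F x c) (G c b) u v else 0)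
    - (-1) ^ (par x y * par a c) * (if c = x then mmul (p+q) (F a y) (G c b) u v else 0)
    + (-1) ^ (par x y * par a c) * (if y = c then mmul (p+q) (F a c) (G x b) u v else 0)
    - (-1) ^ (par x y * par a b) * (if b = x then mmul (p+q) (F a c) (G c y) u v else 0)"
proof -
  let ?N = "p+q" and ?e = "par x y"
  have "supercomm ?N ?e (par a b) (E x y) (mmul ?N (F a c) (G c b)) u v =
      mmul ?N (supercomm ?N ?e (par a c) (E x y) (F a c)) (G c b) u v
      + (-1) ^ (?e * par a c) * mmul ?N (F a c) (supercomm ?N ?e (par c b) (E x y) (G c b)) u v"
    by (rule supercomm_leibniz) (rule sign_par_split)
  also have "\<dots> = (if y = a then mmul ?N (F x c) (G c b) u v else 0)
      - (-1) ^ (?e * par a c) * (if c = x then mmul ?N (F a y) (G c b) u v else 0)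
      + (-1) ^ (?e * par a c) * ((if y = c then mmul ?N (F a c) (G x b) u v else 0)
        - (-1) ^ (?e * par c b) * (if b = x then mmul ?N (F a c) (G c y) u v else 0))"
    using F G idx unfolding covariant_def by simp
  finally show ?thesis
    using sign_par_split[of ?e a b c] by (simp add: algebra_simps)
qed

lemma covariant_contract:
  assumes F: "covariant F" and G: "covariant G"
  shows "covariant (contract F G)"
  unfolding covariant_def
proof (intro ballI ext)
  fix x y a b :: "nat \<times> nat" and u v
  assume idx: "x \<in> Idx" "y \<in> Idx" "a \<in> Idx" "b \<in> Idx"
  let ?N = "p+q" and ?sg = "\<lambda>c::nat \<times> nat. (-1::complex) ^ fst c"
  let ?s = "\<lambda>c. (-1::complex) ^ (par x y * par a c)" and ?t = "(-1::complex) ^ (par x y * par a b)"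
  let ?A = "\<lambda>c. if y = a then mmul ?N (F x c) (G c b) u v else 0"
  let ?B = "\<lambda>c. if c = x then mmul ?N (F a y) (G c b) u v else 0"
  let ?C = "\<lambda>c. if y = c then mmul ?N (F a c) (G x b) u v else 0"
  let ?D = "\<lambda>c. if b = x then mmul ?N (F a c) (G c y) u v else 0"
  have "supercomm ?N (par x y) (par a b) (E x y) (contract F G a b) u v
      = (\<Sum>c\<in>Idx. ?sg c * supercomm ?N (par x y) (par a b) (E x y) (mmul ?N (F a c) (G c b)) u v)"
    unfolding contract_def by (rule supercomm_sum)
  also have "\<dots> = (\<Sum>c\<in>Idx. ?sg c * ?A c - ?sg c * ?s c * ?B c + ?sg c * ?s c * ?C c - ?t * (?sg c * ?D c))"
    by (intro sum.cong refl) (simp add: supercomm_E_mmul[OF F G idx] algebra_simps)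
  also have "\<dots> = (\<Sum>c\<in>Idx. ?sg c * ?A c) - (\<Sum>c\<in>Idx. ?sg c * ?s c * ?B c)
      + (\<Sum>c\<in>Idx. ?sg c * ?s c * ?C c) - ?t * (\<Sum>c\<in>Idx. ?sg c * ?D c)"
    by (simp only: sum.distrib sum_subtractf sum_distrib_left)
  also have "(\<Sum>c\<in>Idx. ?sg c * ?s c * ?B c) = (\<Sum>c\<in>Idx. ?sg c * ?s c * ?C c)"
  proof -
    have "(\<Sum>c\<in>Idx. ?sg c * ?s c * ?B c) = ?sg x * ?s x * mmul ?N (F a y) (G x b) u v"
      using idx(1) by (simp add: if_distrib[of "\<lambda>z. _ * z"] cong: if_cong)
    also have "\<dots> = ?sg y * ?s y * mmul ?N (F a y) (G x b) u v"
      \<comment> \<open>so the two middle terms of the Leibniz expansion cancel\<close>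
      by (metis sign_par_swap)
    also have "\<dots> = (\<Sum>c\<in>Idx. ?sg c * ?s c * ?C c)"
      using idx(2) by (simp add: if_distrib[of "\<lambda>z. _ * z"] cong: if_cong)
    finally show ?thesis .
  qed
  also have "(\<Sum>c\<in>Idx. ?sg c * ?A c) = (if y = a then contract F G x b u v else 0)"
    by (simp add: contract_def)
  also have "(\<Sum>c\<in>Idx. ?sg c * ?D c) = (if b = x then contract F G a y u v else 0)"
    by (simp add: contract_def)
  finally show "supercomm ?N (par x y) (par a b) (E x y) (contract F G a b) u v =
      (if y = a then contract F G x b u v else 0) - ?t * (if b = x then contract F G a y u v else 0)"
    by simp
qed

fun E_power :: "nat \<Rightarrow> nat \<times> nat \<Rightarrow> nat \<times> nat \<Rightarrow> cmat" where
  "E_power 0 = E"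
| "E_power (Suc k) = contract (E_power k) E"

lemma covariant_E_power: "covariant (E_power k)"
  by (induction k) (simp_all add: covariant_E covariant_contract)

lemma homog_family_E_power: "homog_family (E_power k)"
  by (induction k) (simp_all add: homog_family_E homog_family_contract)

definition casimir :: "nat \<Rightarrow> cmat" where
  "casimir k = (\<lambda>u v. \<Sum>a\<in>Idx. E_power k a a u v)"

lemma covariant_trace_commutes:
  assumes F: "covariant F" and idx: "x \<in> Idx" "y \<in> Idx"
  shows "mmul (p+q) (E x y) (\<lambda>u v. \<Sum>a\<in>Idx. F a a u v) u v =
    mmul (p+q) (\<lambda>u v. \<Sum>a\<in>Idx. F a a u v) (E x y) u v"
proof -
  have "mmul (p+q) (E x y) (\<lambda>u v. \<Sum>a\<in>Idx. F a a u v) u v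
      - mmul (p+q) (\<lambda>u v. \<Sum>a\<in>Idx. F a a u v) (E x y) u v
      = (\<Sum>a\<in>Idx. supercomm (p+q) (par x y) (par a a) (E x y) (F a a) u v)"
    unfolding supercomm_def by (simp add: mmul_sum_left mmul_sum_right sum_subtractf)
  also have "\<dots> = (\<Sum>a\<in>Idx. (if y = a then F x a u v else 0) - (if a = x then F a y u v else 0))"
  proof (intro sum.cong refl)
    fix a assume "a \<in> Idx"
    from covariantD[OF F idx this this, of u v]
    show "supercomm (p+q) (par x y) (par a a) (E x y) (F a a) u v =
        (if y = a then F x a u v else 0) - (if a = x then F a y u v else 0)"
      by simp
  qed
  also have "\<dots> = 0"
    using idx by (simp add: sum_subtractf)
  finally show ?thesis by simp
qed

lemma covariant_trace_str:
  assumes F: "covariant F" "homog_family F"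
  shows "str (p+q) p (\<lambda>u v. \<Sum>a\<in>Idx. F a a u v) = 0"
proof -
  have idx: "(0, i) \<in> Idx" "(1, i) \<in> Idx" if "i < n" for i
    using that by (simp_all add: Idx_def)
  have "F (0, i) (0, i) u v + F (1, i) (1, i) u v
      = supercomm (p+q) 1 1 (E (0, i) (1, i)) (F (1, i) (0, i)) u v" if "i < n" for i u v
    using covariantD[OF F(1) idx(1)[OF that] idx(2)[OF that] idx(2)[OF that] idx(1)[OF that], of u v]
    by (simp add: par_def epar_def)
  then have "(\<lambda>u v. \<Sum>a\<in>Idx. F a a u v)
      = (\<lambda>u v. \<Sum>i<n. supercomm (p+q) 1 1 (E (0, i) (1, i)) (F (1, i) (0, i)) u v)"
    unfolding sum_Idx by (intro ext sum.cong) auto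
  moreover have "str (p+q) p (supercomm (p+q) 1 1 (E (0, i) (1, i)) (F (1, i) (0, i))) = 0"
    if "i < n" for i
    using homog_E[OF idx[OF that]] by (intro str_supercomm_odd) (simp add: par_def epar_def)
  ultimately show ?thesis by (simp add: str_sum)
qed

lemma sum_Idx_intervals: "(\<Sum>c\<in>Idx. f c) = (\<Sum>\<sigma>\<in>{0..<2}. \<Sum>i\<in>{0..<n}. f (\<sigma>, i))"
proof -
  have "{0..<2::nat} = {0, 1}" by auto
  then show ?thesis unfolding Idx_def by (simp add: sum.cartesian_product' atLeast0LessThan)
qed

lemma mlist_prod_snoc_E: "mlist_prod (p+q) (As @ [E a b]) = mmul (p+q) (mlist_prod (p+q) As) (E a b)"
  unfolding E_def by (rule mlist_prod_snoc_trunc)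

definition path_node ::
  "nat \<Rightarrow> nat \<times> nat \<Rightarrow> nat \<times> nat \<Rightarrow> (nat \<Rightarrow> nat) \<Rightarrow> (nat \<Rightarrow> nat) \<Rightarrow> nat \<Rightarrow> nat \<times> nat" where
  "path_node k a b s j l = (if l = 0 then a else if l \<le> k then (s l, j l) else b)"

definition path_prod :: "nat \<Rightarrow> nat \<times> nat \<Rightarrow> nat \<times> nat \<Rightarrow> (nat \<Rightarrow> nat) \<Rightarrow> (nat \<Rightarrow> nat) \<Rightarrow> cmat" where
  "path_prod k a b s j =
     mlist_prod (p+q) (map (\<lambda>l. E (path_node k a b s j l) (path_node k a b s j (Suc l))) [0..<Suc k])"

lemma path_prod_0: "path_prod 0 a b s j = E a b"
  unfolding path_prod_def path_node_def mlist_prod_def E_def by (simp add: mmul_mone_right_trunc)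

lemma path_prod_Suc:
  "path_prod (Suc k) a b (s(Suc k := \<sigma>)) (j(Suc k := i)) = mmul (p+q) (path_prod k a (\<sigma>, i) s j) (E (\<sigma>, i) b)"
proof -
  let ?m = "path_node (Suc k) a b (s(Suc k := \<sigma>)) (j(Suc k := i))" and ?m' = "path_node k a (\<sigma>, i) s j"
  have "map (\<lambda>l. E (?m l) (?m (Suc l))) [0..<Suc (Suc k)] =
      map (\<lambda>l. E (?m l) (?m (Suc l))) [0..<Suc k] @ [E (?m (Suc k)) (?m (Suc (Suc k)))]"
    by simp
  also have "map (\<lambda>l. E (?m l) (?m (Suc l))) [0..<Suc k] = map (\<lambda>l. E (?m' l) (?m' (Suc l))) [0..<Suc k]"
    by (rule map_cong) (auto simp: path_node_def)
  also have "E (?m (Suc k)) (?m (Suc (Suc k))) = E (\<sigma>, i) b"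
    by (simp add: path_node_def)
  finally show ?thesis
    unfolding path_prod_def by (simp only: mlist_prod_snoc_E)
qed

lemma sum_upd_Suc:
  "(\<Sum>l\<in>{1..<Suc (Suc k)}. (s(Suc k := \<sigma>)) l) = (\<Sum>l\<in>{1..<Suc k}. s l) + \<sigma>"
proof -
  have "(\<Sum>l\<in>{1..<Suc k}. (s(Suc k := \<sigma>)) l) = (\<Sum>l\<in>{1..<Suc k}. s l)"
    by (intro sum.cong) auto
  then show ?thesis by simp
qed

text \<open>E_power k a b expanded as a sum over the paths a, (s 1, j 1), ..., (s k, j k), b; this is
  the form of the sum defining casimir_image.\<close>

definition path_sum :: "nat \<Rightarrow> nat \<times> nat \<Rightarrow> nat \<times> nat \<Rightarrow> cmat" where
  "path_sum k a b = (\<lambda>u v. \<Sum>s\<in>{1..<Suc k} \<rightarrow>\<^sub>E {0..<2}. \<Sum>j\<in>{1..<Suc k} \<rightarrow>\<^sub>E {0..<n}.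
      (-1) ^ (\<Sum>l\<in>{1..<Suc k}. s l) * path_prod k a b s j u v)"

lemma path_sum_last_node:
  "(\<Sum>s\<in>{1..<Suc k} \<rightarrow>\<^sub>E {0..<2}. \<Sum>j\<in>{1..<Suc k} \<rightarrow>\<^sub>E {0..<n}.
      (-1) ^ (\<Sum>l\<in>{1..<Suc (Suc k)}. (s(Suc k := \<sigma>)) l) *
      path_prod (Suc k) a b (s(Suc k := \<sigma>)) (j(Suc k := i)) u v)
    = (-1) ^ \<sigma> * mmul (p+q) (path_sum k a (\<sigma>, i)) (E (\<sigma>, i) b) u v"
proof -
  let ?S = "{1..<Suc k} \<rightarrow>\<^sub>E {0..<2::nat}" and ?J = "{1..<Suc k} \<rightarrow>\<^sub>E {0..<n}"
  have "(\<Sum>s\<in>?S. \<Sum>j\<in>?J. (-1) ^ (\<Sum>l\<in>{1..<Suc (Suc k)}. (s(Suc k := \<sigma>)) l) *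
        path_prod (Suc k) a b (s(Suc k := \<sigma>)) (j(Suc k := i)) u v)
      = (\<Sum>s\<in>?S. \<Sum>j\<in>?J. (-1) ^ \<sigma> *
          ((-1) ^ (\<Sum>l\<in>{1..<Suc k}. s l) * mmul (p+q) (path_prod k a (\<sigma>, i) s j) (E (\<sigma>, i) b) u v))"
    by (intro sum.cong refl) (simp only: sum_upd_Suc path_prod_Suc power_add mult_ac)
  also have "\<dots> = (-1) ^ \<sigma> * mmul (p+q) (path_sum k a (\<sigma>, i)) (E (\<sigma>, i) b) u v"
    unfolding path_sum_def by (simp only: mmul_sum_left mmul_scale_left sum_distrib_left)
  finally show ?thesis .
qed

lemma path_sum_Suc: "path_sum (Suc k) a b = contract (path_sum k) E a b"
proof (intro ext)
  fix u v
  have ins: "{1..<Suc (Suc k)} = insert (Suc k) {1..<Suc k}" by auto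
  have "path_sum (Suc k) a b u v
      = (\<Sum>\<sigma>\<in>{0..<2}. \<Sum>i\<in>{0..<n}. \<Sum>s\<in>{1..<Suc k} \<rightarrow>\<^sub>E {0..<2}. \<Sum>j\<in>{1..<Suc k} \<rightarrow>\<^sub>E {0..<n}.
          (-1) ^ (\<Sum>l\<in>{1..<Suc (Suc k)}. (s(Suc k := \<sigma>)) l) *
          path_prod (Suc k) a b (s(Suc k := \<sigma>)) (j(Suc k := i)) u v)"
    using sum_PiE_pair_insert[where x = "Suc k" and S = "{1..<Suc k}" and A = "{0..<2}" and B = "{0..<n}"
        and F = "\<lambda>s j. (-1) ^ (\<Sum>l\<in>{1..<Suc (Suc k)}. s l) * path_prod (Suc k) a b s j u v"]
    unfolding path_sum_def ins[symmetric] by simp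
  also have "\<dots> = (\<Sum>\<sigma>\<in>{0..<2}. \<Sum>i\<in>{0..<n}. (-1) ^ \<sigma> * mmul (p+q) (path_sum k a (\<sigma>, i)) (E (\<sigma>, i) b) u v)"
    by (simp only: path_sum_last_node)
  also have "\<dots> = contract (path_sum k) E a b u v"
    by (simp add: contract_def sum_Idx_intervals)
  finally show "path_sum (Suc k) a b u v = contract (path_sum k) E a b u v" .
qed

lemma E_power_eq_path_sum: "E_power k = path_sum k"
proof (induction k)
  case 0
  show ?case by (intro ext) (simp add: path_sum_def path_prod_0)
next
  case (Suc k)
  then show ?case by (intro ext) (simp add: path_sum_Suc)
qed

lemma cyclic_prod_eq_path_prod:
  assumes "u < p+q" "v < p+q"
  shows "mlist_prod (p+q) (map (\<lambda>l. \<rho> ((s(0 := \<sigma>)) l) ((s(0 := \<sigma>)) ((l + 1) mod Suc k))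
      ((j(0 := i)) l) ((j(0 := i)) ((l + 1) mod Suc k))) [0..<Suc k]) u v
    = path_prod k (\<sigma>, i) (\<sigma>, i) s j u v"
proof -
  let ?s = "s(0 := \<sigma>)" and ?j = "j(0 := i)" and ?m = "path_node k (\<sigma>, i) (\<sigma>, i) s j"
  let ?f = "\<lambda>l. \<rho> (?s l) (?s ((l + 1) mod Suc k)) (?j l) (?j ((l + 1) mod Suc k))"
  have node: "?m l = (?s l, ?j l)" if "l \<le> k" for l
    using that by (simp add: path_node_def)
  have node_Suc: "?m (Suc l) = (?s ((l + 1) mod Suc k), ?j ((l + 1) mod Suc k))" if "l \<le> k" for l
    using that by (cases "l = k") (simp_all add: path_node_def)
  have "map (trunc (p+q) \<circ> ?f) [0..<Suc k] = map (\<lambda>l. E (?m l) (?m (Suc l))) [0..<Suc k]"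
  proof (rule map_cong[OF refl])
    fix l assume "l \<in> set [0..<Suc k]"
    then have "l \<le> k" by auto
    then show "(trunc (p+q) \<circ> ?f) l = E (?m l) (?m (Suc l))"
      by (simp add: node node_Suc E_def del: fun_upd_apply)
  qed
  then have "mlist_prod (p+q) (map (trunc (p+q)) (map ?f [0..<Suc k])) u v = path_prod k (\<sigma>, i) (\<sigma>, i) s j u v"
    unfolding path_prod_def map_map by (rule arg_cong)
  then show ?thesis
    unfolding mlist_prod_map_trunc[OF assms] .
qed

lemma casimir_image_eq_casimir:
  assumes uv: "u < p+q" "v < p+q"
  shows "casimir_image n p q \<rho> (Suc k) u v = casimir k u v"
proof -
  let ?S = "{1..<Suc k} \<rightarrow>\<^sub>E {0..<2::nat}" and ?J = "{1..<Suc k} \<rightarrow>\<^sub>E {0..<n}"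
  let ?F = "\<lambda>s j. (-1::complex) ^ (\<Sum>l\<in>{1..<Suc k}. s l) * mlist_prod (p+q)
      (map (\<lambda>l. \<rho> (s l) (s ((l + 1) mod Suc k)) (j l) (j ((l + 1) mod Suc k))) [0..<Suc k]) u v"
  have ins: "{0..<Suc k} = insert 0 {1..<Suc k}" by auto
  have "casimir_image n p q \<rho> (Suc k) u v =
      (\<Sum>s\<in>insert 0 {1..<Suc k} \<rightarrow>\<^sub>E {0..<2}. \<Sum>j\<in>insert 0 {1..<Suc k} \<rightarrow>\<^sub>E {0..<n}. ?F s j)"
    unfolding casimir_image_def ins ..
  also have "\<dots> = (\<Sum>\<sigma>\<in>{0..<2}. \<Sum>i\<in>{0..<n}. \<Sum>s\<in>?S. \<Sum>j\<in>?J. ?F (s(0 := \<sigma>)) (j(0 := i)))"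
    by (rule sum_PiE_pair_insert[where F = ?F]) simp
  also have "\<dots> = (\<Sum>\<sigma>\<in>{0..<2}. \<Sum>i\<in>{0..<n}. E_power k (\<sigma>, i) (\<sigma>, i) u v)"
  proof (intro sum.cong refl)
    fix \<sigma> i
    have sign: "(\<Sum>l\<in>{1..<Suc k}. (s(0 := \<sigma>)) l) = (\<Sum>l\<in>{1..<Suc k}. s l)" for s :: "nat \<Rightarrow> nat"
      by (intro sum.cong) auto
    have "(\<Sum>s\<in>?S. \<Sum>j\<in>?J. ?F (s(0 := \<sigma>)) (j(0 := i))) =
        (\<Sum>s\<in>?S. \<Sum>j\<in>?J. (-1) ^ (\<Sum>l\<in>{1..<Suc k}. s l) * path_prod k (\<sigma>, i) (\<sigma>, i) s j u v)"
      by (intro sum.cong refl) (simp only: sign cyclic_prod_eq_path_prod[OF uv])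
    also have "\<dots> = E_power k (\<sigma>, i) (\<sigma>, i) u v"
      by (simp only: E_power_eq_path_sum path_sum_def)
    finally show "(\<Sum>s\<in>?S. \<Sum>j\<in>?J. ?F (s(0 := \<sigma>)) (j(0 := i))) = E_power k (\<sigma>, i) (\<sigma>, i) u v" .
  qed
  also have "\<dots> = casimir k u v"
    by (simp add: casimir_def sum_Idx_intervals)
  finally show ?thesis .
qed

lemma homog_casimir: "homog p q 0 (casimir k)"
proof -
  have "homog p q 0 (\<lambda>u v. \<Sum>a\<in>Idx. 1 * E_power k a a u v)"
    using homog_family_E_power[of k] unfolding homog_family_def
    by (intro homog_sum) (metis par_self)
  then show ?thesis by (simp add: casimir_def)
qed

lemma casimir_commutes:
  assumes "\<sigma> < 2" "\<tau> < 2" "i < n" "j < n" "u < p+q" "v < p+q"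
  shows "mmul (p+q) (casimir k) (\<rho> \<sigma> \<tau> i j) u v = mmul (p+q) (\<rho> \<sigma> \<tau> i j) (casimir k) u v"
proof -
  have "(\<sigma>, i) \<in> Idx" "(\<tau>, j) \<in> Idx" using assms(1-4) by (auto simp: Idx_def)
  from covariant_trace_commutes[OF covariant_E_power this, of k u v]
  show ?thesis
    using assms(5,6) unfolding casimir_def[symmetric] E_def
    by (simp add: mmul_trunc_left mmul_trunc_right)
qed

lemma str_casimir: "str (p+q) p (casimir k) = 0"
  unfolding casimir_def by (rule covariant_trace_str[OF covariant_E_power homog_family_E_power])

end

theorem mainTheorem7:
  fixes n p q l :: nat and \<rho> :: "nat \<Rightarrow> nat \<Rightarrow> nat \<Rightarrow> nat \<Rightarrow> cmat"
  assumes "is_rep n p q \<rho>"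
    and "irreducible_rep n p q \<rho>"
    and "p \<noteq> q"
    and "1 \<le> l"
  shows "\<forall>x<p+q. \<forall>y<p+q. casimir_image n p q \<rho> l x y = 0"
proof -
  interpret gl_rep n p q \<rho> by (rule gl_rep.intro) (rule assms(1))
  obtain k where l: "l = Suc k" using assms(4) by (cases l) auto
  obtain c where scalar: "\<And>u v. u < p+q \<Longrightarrow> v < p+q \<Longrightarrow> casimir k u v = c * mone u v"
    using even_commuting_operator_scalar[OF assms(2) homog_casimir casimir_commutes] by blast
  have "c * (of_nat p - of_nat q) = 0"
    using str_scalar[of p q "casimir k" c] scalar str_casimir by (simp add: mone_def)
  then have "c = 0" using assms(3) by simp
  then show ?thesis using scalar casimir_image_eq_casimir l by simp
qed

end
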